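(* Let $\theta_1,\theta_2\in\Theta$, $\theta_\alpha=\alpha\theta_1+(1-\alpha)\theta_2$. Then for $\alpha\in[0,1]$, $D^{\mathrm w}_{B,\alpha}(p_{\theta_1},p_{\theta_2})=\alpha F(\theta_1)+(1-\alpha)F(\theta_2)-\hat F(\theta_\alpha)$. Assume moreover that $\hat F$ is strictly convex on the segment $[\theta_1,\theta_2]$ and that a maximiser $\alpha^*$ of $\alpha\mapsto D^{\mathrm w}_{B,\alpha}(p_{\theta_1},p_{\theta_2})$ over $[0,1]$ exists and lies in $(0,1)$. Then $\alpha^*$ is unique and satisfies \[ (\theta_1-\theta_2)^{\mathrm T}\nabla\hat F(\theta_{\alpha^*})=F(\theta_1)-F(\theta_2), \] where $\nabla\hat F(\theta)=\mathbb E_{p^*_\theta}[t(X)]$ with $p^*_\theta=\varphi p_\theta/E_\varphi(\theta)$.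
   Context: Let $\mu$ be a $\sigma$-finite measure on $\mathcal X$ and $\varphi\ge0$ a measurable weight. Let $\{p_\theta:\theta\in\Theta\}$, $\Theta\subset\mathbb R^d$ open and convex, be a regular exponential family $p_\theta(x)=\exp\{\theta^{\mathrm T}t(x)-F(\theta)+k(x)\}$. Set $E_\varphi(\theta)=\int\varphi p_\theta\,\mathrm d\mu\in(0,\infty)$ and $\hat F(\theta)=\ln\int\varphi(x)e^{\theta^{\mathrm T}t(x)+k(x)}\,\mathrm d\mu(x)=F(\theta)+\ln E_\varphi(\theta)$, finite and differentiable on $\Theta$ (differentiation under the integral sign allowed). Weighted affinity $\rho^{\mathrm w}_\alpha(p,q)=\int\varphi\,p^\alpha q^{1-\alpha}\,\mathrm d\mu$ and weighted Bhattacharyya distance $D^{\mathrm w}_{B,\alpha}(p,q)=-\ln\rho^{\mathrm w}_\alpha(p,q)$. *)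

theory Defs
  imports "HOL-Analysis.Analysis"
begin

definition strict_convex_on :: "'a::real_vector set \<Rightarrow> ('a \<Rightarrow> real) \<Rightarrow> bool" where
  "strict_convex_on S f \<longleftrightarrow>
     (\<forall>x\<in>S. \<forall>y\<in>S. x \<noteq> y \<longrightarrow> (\<forall>u::real. 0 < u \<and> u < 1 \<longrightarrow>
        f (u *\<^sub>R x + (1 - u) *\<^sub>R y) < u * f x + (1 - u) * f y))"

definition logpart :: "'a measure \<Rightarrow> ('a \<Rightarrow> 'd::euclidean_space) \<Rightarrow> ('a \<Rightarrow> real) \<Rightarrow> 'd \<Rightarrow> real" where
  "logpart M t k \<theta> = ln (\<integral>x. exp (\<theta> \<bullet> t x + k x) \<partial>M)"

definition expfam :: "'a measure \<Rightarrow> ('a \<Rightarrow> 'd::euclidean_space) \<Rightarrow> ('a \<Rightarrow> real) \<Rightarrow> 'd \<Rightarrow> 'a \<Rightarrow> real" where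
  "expfam M t k \<theta> x = exp (\<theta> \<bullet> t x - logpart M t k \<theta> + k x)"

definition Ephi :: "'a measure \<Rightarrow> ('a \<Rightarrow> real) \<Rightarrow> ('a \<Rightarrow> 'd::euclidean_space) \<Rightarrow> ('a \<Rightarrow> real) \<Rightarrow> 'd \<Rightarrow> real" where
  "Ephi M \<phi> t k \<theta> = (\<integral>x. \<phi> x * expfam M t k \<theta> x \<partial>M)"

definition Fhat :: "'a measure \<Rightarrow> ('a \<Rightarrow> real) \<Rightarrow> ('a \<Rightarrow> 'd::euclidean_space) \<Rightarrow> ('a \<Rightarrow> real) \<Rightarrow> 'd \<Rightarrow> real" where
  "Fhat M \<phi> t k \<theta> = ln (\<integral>x. \<phi> x * exp (\<theta> \<bullet> t x + k x) \<partial>M)"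

definition wrho :: "'a measure \<Rightarrow> ('a \<Rightarrow> real) \<Rightarrow> real \<Rightarrow> ('a \<Rightarrow> real) \<Rightarrow> ('a \<Rightarrow> real) \<Rightarrow> real" where
  "wrho M \<phi> \<alpha> p q = (\<integral>x. \<phi> x * (p x powr \<alpha>) * (q x powr (1 - \<alpha>)) \<partial>M)"

definition wbhat :: "'a measure \<Rightarrow> ('a \<Rightarrow> real) \<Rightarrow> real \<Rightarrow> ('a \<Rightarrow> real) \<Rightarrow> ('a \<Rightarrow> real) \<Rightarrow> real" where
  "wbhat M \<phi> \<alpha> p q = - ln (wrho M \<phi> \<alpha> p q)"

definition escort_mean :: "'a measure \<Rightarrow> ('a \<Rightarrow> real) \<Rightarrow> ('a \<Rightarrow> 'd::euclidean_space) \<Rightarrow> ('a \<Rightarrow> real) \<Rightarrow> 'd \<Rightarrow> 'd" where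
  "escort_mean M \<phi> t k \<theta> =
     (\<integral>x. (\<phi> x * expfam M t k \<theta> x / Ephi M \<phi> t k \<theta>) *\<^sub>R t x \<partial>M)"

end

theory Submission
  imports Defs
begin

text \<open>Writing \<open>\<theta>\<^sub>\<alpha> = \<alpha> \<theta>\<^sub>1 + (1 - \<alpha>) \<theta>\<^sub>2\<close>, the product
  \<open>p\<^sub>1 ^ \<alpha> * p\<^sub>2 ^ (1 - \<alpha>)\<close> is \<open>exp (\<theta>\<^sub>\<alpha> \<bullet> t + k)\<close> divided by
  \<open>exp (\<alpha> F \<theta>\<^sub>1 + (1 - \<alpha>) F \<theta>\<^sub>2)\<close>, so integrating against \<open>\<phi>\<close> gives the closed form of
  the distance. It is an affine function of \<open>\<alpha>\<close> minus the strictly convex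
  \<open>\<alpha> \<mapsto> Fhat \<theta>\<^sub>\<alpha>\<close>, hence has at most one maximiser, and at an interior maximiser
  its derivative in \<open>\<alpha>\<close> vanishes. Since the gradient of \<open>Fhat\<close>, the logarithm of the
  weighted partition function, is the escort mean of \<open>t\<close>, the chain rule turns this into
  the stated equation.\<close>

definition wpartition ::
    "'a measure \<Rightarrow> ('a \<Rightarrow> real) \<Rightarrow> ('a \<Rightarrow> 'd::euclidean_space) \<Rightarrow> ('a \<Rightarrow> real) \<Rightarrow> 'd \<Rightarrow> real" where
  "wpartition M \<phi> t k \<theta> = (\<integral>x. \<phi> x * exp (\<theta> \<bullet> t x + k x) \<partial>M)"

lemma Fhat_eq_ln_wpartition: "Fhat M \<phi> t k \<theta> = ln (wpartition M \<phi> t k \<theta>)"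
  unfolding Fhat_def wpartition_def ..

lemma expfam_eq: "expfam M t k \<theta> x = exp (\<theta> \<bullet> t x + k x) * exp (- logpart M t k \<theta>)"
  unfolding expfam_def by (simp add: mult_exp_exp)

lemma Ephi_eq_wpartition:
  "Ephi M \<phi> t k \<theta> = wpartition M \<phi> t k \<theta> * exp (- logpart M t k \<theta>)"
  unfolding Ephi_def wpartition_def expfam_eq by (simp flip: mult.assoc)

lemma Ephi_pos_iff: "0 < Ephi M \<phi> t k \<theta> \<longleftrightarrow> 0 < wpartition M \<phi> t k \<theta>"
  unfolding Ephi_eq_wpartition by (simp add: zero_less_mult_iff)

lemma wrho_expfam:
  "wrho M \<phi> \<alpha> (expfam M t k \<theta>1) (expfam M t k \<theta>2)
     = wpartition M \<phi> t k (\<alpha> *\<^sub>R \<theta>1 + (1 - \<alpha>) *\<^sub>R \<theta>2)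
       * exp (- (\<alpha> * logpart M t k \<theta>1 + (1 - \<alpha>) * logpart M t k \<theta>2))"
proof -
  have "wrho M \<phi> \<alpha> (expfam M t k \<theta>1) (expfam M t k \<theta>2)
      = (\<integral>x. \<phi> x * exp ((\<alpha> *\<^sub>R \<theta>1 + (1 - \<alpha>) *\<^sub>R \<theta>2) \<bullet> t x + k x)
              * exp (- (\<alpha> * logpart M t k \<theta>1 + (1 - \<alpha>) * logpart M t k \<theta>2)) \<partial>M)"
    unfolding wrho_def expfam_def
    by (intro Bochner_Integration.integral_cong refl)
      (simp add: powr_def exp_add[symmetric] inner_add_left algebra_simps)
  then show ?thesis
    unfolding wpartition_def by simp
qed

lemma wbhat_expfam:
  assumes "0 < wpartition M \<phi> t k (\<alpha> *\<^sub>R \<theta>1 + (1 - \<alpha>) *\<^sub>R \<theta>2)"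
  shows "wbhat M \<phi> \<alpha> (expfam M t k \<theta>1) (expfam M t k \<theta>2)
           = \<alpha> * logpart M t k \<theta>1 + (1 - \<alpha>) * logpart M t k \<theta>2
             - Fhat M \<phi> t k (\<alpha> *\<^sub>R \<theta>1 + (1 - \<alpha>) *\<^sub>R \<theta>2)"
  unfolding wbhat_def wrho_expfam Fhat_eq_ln_wpartition using assms by (simp add: ln_mult)

lemma escort_mean_eq:
  "escort_mean M \<phi> t k \<theta>
     = (1 / wpartition M \<phi> t k \<theta>) *\<^sub>R (\<integral>x. (\<phi> x * exp (\<theta> \<bullet> t x + k x)) *\<^sub>R t x \<partial>M)"
proof -
  have "escort_mean M \<phi> t k \<theta>
      = (\<integral>x. (1 / wpartition M \<phi> t k \<theta>) *\<^sub>R ((\<phi> x * exp (\<theta> \<bullet> t x + k x)) *\<^sub>R t x) \<partial>M)"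
    unfolding escort_mean_def Ephi_eq_wpartition expfam_eq
    by (intro Bochner_Integration.integral_cong refl) simp
  then show ?thesis
    by (simp only: integral_scaleR_right)
qed

lemma Fhat_has_derivative_escort_mean:
  assumes pos: "0 < wpartition M \<phi> t k \<theta>"
    and int: "integrable M (\<lambda>x. (\<phi> x * exp (\<theta> \<bullet> t x + k x)) *\<^sub>R t x)"
    and deriv: "((\<lambda>\<eta>. \<integral>x. \<phi> x * exp (\<eta> \<bullet> t x + k x) \<partial>M) has_derivative
                  (\<lambda>h. \<integral>x. \<phi> x * (h \<bullet> t x) * exp (\<theta> \<bullet> t x + k x) \<partial>M)) (at \<theta>)"
  shows "(Fhat M \<phi> t k has_derivative (\<lambda>h. h \<bullet> escort_mean M \<phi> t k \<theta>)) (at \<theta>)"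
proof -
  have "h \<bullet> escort_mean M \<phi> t k \<theta>
      = (\<integral>x. \<phi> x * (h \<bullet> t x) * exp (\<theta> \<bullet> t x + k x) \<partial>M) * inverse (wpartition M \<phi> t k \<theta>)"
    for h
  proof -
    have "h \<bullet> (\<integral>x. (\<phi> x * exp (\<theta> \<bullet> t x + k x)) *\<^sub>R t x \<partial>M)
        = (\<integral>x. h \<bullet> ((\<phi> x * exp (\<theta> \<bullet> t x + k x)) *\<^sub>R t x) \<partial>M)"
      using int by (rule integral_inner_right[symmetric])
    also have "\<dots> = (\<integral>x. \<phi> x * (h \<bullet> t x) * exp (\<theta> \<bullet> t x + k x) \<partial>M)"
      by (intro Bochner_Integration.integral_cong refl) (simp add: algebra_simps)
    finally show ?thesis
      unfolding escort_mean_eq by (simp add: field_simps)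
  qed
  then show ?thesis
    using has_derivative_ln[OF pos[unfolded wpartition_def] deriv]
    unfolding Fhat_def wpartition_def by simp
qed

lemma argmax_linear_minus_strict_convex_unique:
  fixes G :: "'a::real_vector \<Rightarrow> real"
  assumes "convex S" and strict: "strict_convex_on S G" and "linear l"
    and "a \<in> S" "b \<in> S"
    and max_a: "\<forall>x\<in>S. l x - G x \<le> l a - G a"
    and max_b: "\<forall>x\<in>S. l x - G x \<le> l b - G b"
  shows "a = b"
proof (rule ccontr)
  assume "a \<noteq> b"
  define m where "m = (1/2) *\<^sub>R a + (1 - 1/2) *\<^sub>R b"
  have "m \<in> S"
    unfolding m_def by (rule convexD[OF \<open>convex S\<close> \<open>a \<in> S\<close> \<open>b \<in> S\<close>]) auto
  have "G (u *\<^sub>R a + (1 - u) *\<^sub>R b) < u * G a + (1 - u) * G b" if "0 < u" "u < 1" for u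
    using strict \<open>a \<in> S\<close> \<open>b \<in> S\<close> \<open>a \<noteq> b\<close> that unfolding strict_convex_on_def by blast
  from this[of "1/2"] have "G m < (1/2) * G a + (1/2) * G b"
    unfolding m_def by simp
  moreover have "l m = (1/2) * l a + (1/2) * l b"
    unfolding m_def using \<open>linear l\<close> by (simp add: linear_add linear_scale)
  moreover have "l m - G m \<le> l a - G a"
    using max_a \<open>m \<in> S\<close> by blast
  moreover have "l a - G a = l b - G b"
    using max_a max_b \<open>a \<in> S\<close> \<open>b \<in> S\<close> by (meson order_antisym)
  ultimately show False
    by linarith
qed

lemma segment_interior_max_gradient:
  fixes G :: "'d::real_inner \<Rightarrow> real"
  assumes deriv: "(G has_derivative (\<lambda>h. h \<bullet> g)) (at (s *\<^sub>R \<theta>1 + (1 - s) *\<^sub>R \<theta>2))"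
    and s: "s \<in> {0<..<1}"
    and maximal: "\<forall>a\<in>{0..1}. a * c1 + (1 - a) * c2 - G (a *\<^sub>R \<theta>1 + (1 - a) *\<^sub>R \<theta>2)
                         \<le> s * c1 + (1 - s) * c2 - G (s *\<^sub>R \<theta>1 + (1 - s) *\<^sub>R \<theta>2)"
  shows "(\<theta>1 - \<theta>2) \<bullet> g = c1 - c2"
proof -
  let ?E = "\<lambda>a. a * c1 + (1 - a) * c2 - G (a *\<^sub>R \<theta>1 + (1 - a) *\<^sub>R \<theta>2)"
  have "((\<lambda>a. a *\<^sub>R \<theta>1 + (1 - a) *\<^sub>R \<theta>2) has_derivative (\<lambda>h. h *\<^sub>R (\<theta>1 - \<theta>2))) (at s)"
    by (auto intro!: derivative_eq_intros simp: algebra_simps)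
  from has_derivative_compose[OF this deriv]
  have "(?E has_derivative (\<lambda>h. h * (c1 - c2 - (\<theta>1 - \<theta>2) \<bullet> g))) (at s)"
    by (auto intro!: derivative_eq_intros simp: algebra_simps)
  moreover have "\<forall>a\<in>{0<..<1}. ?E a \<le> ?E s"
    using maximal by auto
  ultimately have "(\<lambda>h. h * (c1 - c2 - (\<theta>1 - \<theta>2) \<bullet> g)) = (\<lambda>h. 0)"
    using s by (intro differential_zero_maxmin[of s "{0<..<1}"]) auto
  then show ?thesis
    by (metis eq_iff_diff_eq_0 mult_1)
qed

theorem proposition3p5:
  fixes M :: "'a measure" and \<phi> k :: "'a \<Rightarrow> real"
    and t :: "'a \<Rightarrow> 'd::euclidean_space"
    and \<Theta> :: "'d set" and \<theta>1 \<theta>2 :: 'd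
  assumes sigma_finite: "sigma_finite_measure M"
    and phi_meas: "\<phi> \<in> borel_measurable M" and phi_nonneg: "\<And>x. x \<in> space M \<Longrightarrow> 0 \<le> \<phi> x"
    and t_meas: "t \<in> borel_measurable M" and k_meas: "k \<in> borel_measurable M"
    and Theta_open: "open \<Theta>" and Theta_convex: "convex \<Theta>"
    and regular: "\<And>\<theta>. \<theta> \<in> \<Theta> \<Longrightarrow> integrable M (\<lambda>x. exp (\<theta> \<bullet> t x + k x))
                          \<and> (\<integral>x. exp (\<theta> \<bullet> t x + k x) \<partial>M) > 0"
    and Ephi_finite: "\<And>\<theta>. \<theta> \<in> \<Theta> \<Longrightarrow> integrable M (\<lambda>x. \<phi> x * expfam M t k \<theta> x)
                          \<and> Ephi M \<phi> t k \<theta> > 0"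
    and diff_under_int: "\<And>\<theta>. \<theta> \<in> \<Theta> \<Longrightarrow>
          integrable M (\<lambda>x. (\<phi> x * exp (\<theta> \<bullet> t x + k x)) *\<^sub>R t x)
          \<and> ((\<lambda>\<eta>. \<integral>x. \<phi> x * exp (\<eta> \<bullet> t x + k x) \<partial>M) has_derivative
               (\<lambda>h. \<integral>x. \<phi> x * (h \<bullet> t x) * exp (\<theta> \<bullet> t x + k x) \<partial>M)) (at \<theta>)"
    and th1: "\<theta>1 \<in> \<Theta>" and th2: "\<theta>2 \<in> \<Theta>"
  shows "(\<forall>\<alpha>\<in>{0..1::real}.
            wbhat M \<phi> \<alpha> (expfam M t k \<theta>1) (expfam M t k \<theta>2)
            = \<alpha> * logpart M t k \<theta>1 + (1 - \<alpha>) * logpart M t k \<theta>2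
              - Fhat M \<phi> t k (\<alpha> *\<^sub>R \<theta>1 + (1 - \<alpha>) *\<^sub>R \<theta>2))
       \<and> (\<forall>\<alpha>s::real.
            strict_convex_on {0..1::real} (\<lambda>\<alpha>. Fhat M \<phi> t k (\<alpha> *\<^sub>R \<theta>1 + (1 - \<alpha>) *\<^sub>R \<theta>2))
            \<and> \<alpha>s \<in> {0<..<1}
            \<and> (\<forall>\<alpha>\<in>{0..1}. wbhat M \<phi> \<alpha> (expfam M t k \<theta>1) (expfam M t k \<theta>2)
                              \<le> wbhat M \<phi> \<alpha>s (expfam M t k \<theta>1) (expfam M t k \<theta>2))
            \<longrightarrow> (\<forall>\<beta>\<in>{0..1}.
                   (\<forall>\<alpha>\<in>{0..1}. wbhat M \<phi> \<alpha> (expfam M t k \<theta>1) (expfam M t k \<theta>2)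
                                 \<le> wbhat M \<phi> \<beta> (expfam M t k \<theta>1) (expfam M t k \<theta>2))
                   \<longrightarrow> \<beta> = \<alpha>s)
              \<and> (Fhat M \<phi> t k has_derivative
                   (\<lambda>h. h \<bullet> escort_mean M \<phi> t k (\<alpha>s *\<^sub>R \<theta>1 + (1 - \<alpha>s) *\<^sub>R \<theta>2)))
                   (at (\<alpha>s *\<^sub>R \<theta>1 + (1 - \<alpha>s) *\<^sub>R \<theta>2))
              \<and> (\<theta>1 - \<theta>2) \<bullet> escort_mean M \<phi> t k (\<alpha>s *\<^sub>R \<theta>1 + (1 - \<alpha>s) *\<^sub>R \<theta>2)
                = logpart M t k \<theta>1 - logpart M t k \<theta>2)"
proof -
  let ?F = "logpart M t k"
  let ?\<theta> = "\<lambda>a::real. a *\<^sub>R \<theta>1 + (1 - a) *\<^sub>R \<theta>2"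
  let ?D = "\<lambda>a. wbhat M \<phi> a (expfam M t k \<theta>1) (expfam M t k \<theta>2)"
  define G where "G a = Fhat M \<phi> t k (?\<theta> a)" for a
  have pos: "0 < wpartition M \<phi> t k \<theta>" if "\<theta> \<in> \<Theta>" for \<theta>
    using Ephi_finite[OF that] by (simp add: Ephi_pos_iff)
  have on_segment: "?\<theta> a \<in> \<Theta>" if "a \<in> {0..1}" for a
    using that by (intro convexD[OF Theta_convex th1 th2]) auto
  have D_eq: "?D a = a * ?F \<theta>1 + (1 - a) * ?F \<theta>2 - G a" if "a \<in> {0..1}" for a
    unfolding G_def using pos[OF on_segment[OF that]] by (rule wbhat_expfam)
  show ?thesis
  proof (intro conjI allI impI ballI)
    show "?D a = a * ?F \<theta>1 + (1 - a) * ?F \<theta>2 - Fhat M \<phi> t k (?\<theta> a)" if "a \<in> {0..1}" for a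
      using D_eq[OF that] unfolding G_def .
  next
    fix s :: real
    assume "strict_convex_on {0..1} (\<lambda>a. Fhat M \<phi> t k (?\<theta> a)) \<and> s \<in> {0<..<1}
             \<and> (\<forall>a\<in>{0..1}. ?D a \<le> ?D s)"
    then have strict: "strict_convex_on {0..1} G"
      and s: "s \<in> {0<..<1}" and max_s: "\<forall>a\<in>{0..1}. ?D a \<le> ?D s"
      unfolding G_def by auto
    have "s \<in> {0..1}" using s by auto
    have argmax_iff: "(\<forall>a\<in>{0..1}. ?D a \<le> ?D b)
        \<longleftrightarrow> (\<forall>a\<in>{0..1}. (?F \<theta>1 - ?F \<theta>2) * a - G a \<le> (?F \<theta>1 - ?F \<theta>2) * b - G b)"
      if "b \<in> {0..1}" for b
      using that by (simp add: D_eq algebra_simps)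
    show "b = s" if "b \<in> {0..1}" and "\<forall>a\<in>{0..1}. ?D a \<le> ?D b" for b
      using argmax_linear_minus_strict_convex_unique[OF convex_real_interval(5) strict linear_times]
        that \<open>s \<in> {0..1}\<close> max_s argmax_iff by blast
    show deriv: "(Fhat M \<phi> t k has_derivative (\<lambda>h. h \<bullet> escort_mean M \<phi> t k (?\<theta> s))) (at (?\<theta> s))"
      using diff_under_int[OF on_segment] pos[OF on_segment] \<open>s \<in> {0..1}\<close>
      by (intro Fhat_has_derivative_escort_mean) auto
    have "\<forall>a\<in>{0..1}. a * ?F \<theta>1 + (1 - a) * ?F \<theta>2 - Fhat M \<phi> t k (?\<theta> a)
                      \<le> s * ?F \<theta>1 + (1 - s) * ?F \<theta>2 - Fhat M \<phi> t k (?\<theta> s)"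
      using max_s \<open>s \<in> {0..1}\<close> by (simp add: D_eq G_def)
    then show "(\<theta>1 - \<theta>2) \<bullet> escort_mean M \<phi> t k (?\<theta> s) = ?F \<theta>1 - ?F \<theta>2"
      by (rule segment_interior_max_gradient[OF deriv s])
  qed
qed

end
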